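(* (i) For every real $\lambda\ge a_1$ and every $\varepsilon\ge0$, $$|w(\lambda-i\varepsilon)|^2\ge\sum_{j=1}^n c_j|\lambda-a_j|.$$ (ii) Let $\mu\in\rho(A)$ with $\Re\mu\ge a_1$. If $w(\mu)=0$, then $a_1=a_2=\dots=a_n=:\alpha$ and $\mu=\alpha$.
   Context: Fix an integer $n\ge 2$, constants $c_1,\dots,c_n>0$ and $0\le a_1\le a_2\le\dots\le a_n<\infty$. $A$ is the operator in $H=\prod_{k=1}^nL^2(0,\infty)$ given by $Au=(-c_ku_k''+a_ku_k)_k$ on $D(A)=\{u\in\prod_k H^2(0,\infty): u_i(0)=u_k(0)\ \forall i,k,\ \sum_k c_ku_k'(0^+)=0\}$ (the Laplacian-type operator on a star of $n$ half-lines with Kirchhoff conditions). Complex square root convention: $\sqrt{re^{i\phi}}=\sqrt r\,e^{i\phi/2}$ for $r\ge0$, $\phi\in[-\pi,\pi)$. For $\lambda\in\mathbb C$ let $\xi_k(\lambda)=\sqrt{(\lambda-a_k)/c_k}$, and define $w(\lambda)=i\sum_{j=1}^nc_j\xi_j(\lambda)$ if $\Im\lambda>0$ and $w(\lambda)=-i\sum_{j=1}^nc_j\xi_j(\lambda)$ if $\Im\lambda\le0$. *)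

theory Defs
  imports "HOL-Analysis.Analysis"
begin

section \<open>Square root convention: sqrt(r e^{i phi}) = sqrt r e^{i phi/2}, phi in [-pi,pi)\<close>

definition parg :: "complex \<Rightarrow> real" where
  "parg z = (if Im z = 0 \<and> Re z < 0 then - pi else Arg z)"

definition psqrt :: "complex \<Rightarrow> complex" where
  "psqrt z = complex_of_real (sqrt (cmod z)) * exp (\<i> * complex_of_real (parg z / 2))"

definition xi :: "(nat \<Rightarrow> real) \<Rightarrow> (nat \<Rightarrow> real) \<Rightarrow> nat \<Rightarrow> complex \<Rightarrow> complex" where
  "xi c a k z = psqrt ((z - complex_of_real (a k)) / complex_of_real (c k))"

definition wfun :: "nat \<Rightarrow> (nat \<Rightarrow> real) \<Rightarrow> (nat \<Rightarrow> real) \<Rightarrow> complex \<Rightarrow> complex" where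
  "wfun n c a z =
     (if Im z > 0 then \<i> * (\<Sum>j=1..n. complex_of_real (c j) * xi c a j z)
      else - \<i> * (\<Sum>j=1..n. complex_of_real (c j) * xi c a j z))"

text \<open>Elements of H are families u k (k = 1..n) of functions on (0,oo),
  identified up to equality almost everywhere.\<close>

definition L2half :: "(real \<Rightarrow> complex) \<Rightarrow> bool" where
  "L2half f \<longleftrightarrow> set_borel_measurable lborel {0<..} f
      \<and> set_integrable lborel {0<..} (\<lambda>x. (cmod (f x))\<^sup>2)"

definition Hnorm :: "nat \<Rightarrow> (nat \<Rightarrow> real \<Rightarrow> complex) \<Rightarrow> real" where
  "Hnorm n u = sqrt (\<Sum>k=1..n. (LINT x:{0<..}|lborel. (cmod (u k x))\<^sup>2))"

text \<open>H2half f f' f'': f lies in H^2(0,oo) (continuous representative on [0,oo)),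
  with first derivative f' (its continuous representative, so f' 0 = f'(0+))
  and weak second derivative f''.\<close>
definition H2half :: "(real \<Rightarrow> complex) \<Rightarrow> (real \<Rightarrow> complex) \<Rightarrow> (real \<Rightarrow> complex) \<Rightarrow> bool" where
  "H2half f f' f'' \<longleftrightarrow> L2half f \<and> L2half f' \<and> L2half f''
      \<and> (\<forall>x\<ge>0. f x = f 0 + (LINT t:{0..x}|lborel. f' t))
      \<and> (\<forall>x\<ge>0. f' x = f' 0 + (LINT t:{0..x}|lborel. f'' t))"

definition domA :: "nat \<Rightarrow> (nat \<Rightarrow> real) \<Rightarrow> (nat \<Rightarrow> real \<Rightarrow> complex) \<Rightarrow>
    (nat \<Rightarrow> real \<Rightarrow> complex) \<Rightarrow> (nat \<Rightarrow> real \<Rightarrow> complex) \<Rightarrow> bool" where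
  "domA n c u u' u'' \<longleftrightarrow> (\<forall>k\<in>{1..n}. H2half (u k) (u' k) (u'' k))
      \<and> (\<forall>i\<in>{1..n}. \<forall>k\<in>{1..n}. u i 0 = u k 0)
      \<and> (\<Sum>k=1..n. complex_of_real (c k) * u' k 0) = 0"

definition AminusMu :: "(nat \<Rightarrow> real) \<Rightarrow> (nat \<Rightarrow> real) \<Rightarrow> complex \<Rightarrow>
    (nat \<Rightarrow> real \<Rightarrow> complex) \<Rightarrow> (nat \<Rightarrow> real \<Rightarrow> complex) \<Rightarrow> nat \<Rightarrow> real \<Rightarrow> complex" where
  "AminusMu c a \<mu> u u'' k x = - complex_of_real (c k) * u'' k x + (complex_of_real (a k) - \<mu>) * u k x"

definition resolvent_set_A :: "nat \<Rightarrow> (nat \<Rightarrow> real) \<Rightarrow> (nat \<Rightarrow> real) \<Rightarrow> complex set" where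
  "resolvent_set_A n c a = {\<mu>.
     (\<forall>f. (\<forall>k\<in>{1..n}. L2half (f k)) \<longrightarrow>
        (\<exists>u u' u''. domA n c u u' u'' \<and>
           (\<forall>k\<in>{1..n}. AE x in lborel. x > 0 \<longrightarrow> AminusMu c a \<mu> u u'' k x = f k x)))
     \<and> (\<exists>C. \<forall>u u' u''. domA n c u u' u'' \<longrightarrow>
            Hnorm n u \<le> C * Hnorm n (AminusMu c a \<mu> u u''))}"

end

theory Submission
  imports Defs
begin

text \<open>
  With the chosen branch of the square root, psqrt z always lies in the
  closed right half plane, and its imaginary part has the sign of Im z (it is \<le> 0 when
  Im z \<le> 0).  Moreover |psqrt z|^2 = |z|, so every summand c_j xi_j(z) of w has squared
  modulus c_j |z - a_j|.

  The key elementary fact is that for complex numbers in one closed quadrant the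
  squared modulus of a sum dominates the sum of squared moduli (all cross terms are
  nonnegative).  Part (i): for z = lam - i eps all summands lie in the quadrant
  Re \<ge> 0, Im \<le> 0, whence |w(z)|^2 \<ge> sum c_j |z - a_j| \<ge> sum c_j |lam - a_j|.
  Part (ii): if w(mu) = 0 then Im mu = 0, since otherwise all summands have imaginary
  parts of the strict sign of Im mu; for real mu the quadrant inequality gives
  sum c_j |mu - a_j| \<le> 0, so every a_j equals mu.
\<close>

lemma parg_range: "-pi \<le> parg z \<and> parg z \<le> pi"
  unfolding parg_def using mpi_less_Arg[of z] Arg_le_pi[of z] by auto

lemma parg_nonpos: "Im z \<le> 0 \<Longrightarrow> parg z \<le> 0"
  using Arg_neg_iff[of z] Arg_eq_0[of z]
  by (cases "Im z < 0") (auto simp: parg_def complex_is_Real_iff)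

lemma psqrt_cis: "psqrt z = complex_of_real (sqrt (cmod z)) * cis (parg z / 2)"
  by (simp add: psqrt_def cis_conv_exp)

lemma psqrt_Re: "Re (psqrt z) = sqrt (cmod z) * cos (parg z / 2)"
  and psqrt_Im: "Im (psqrt z) = sqrt (cmod z) * sin (parg z / 2)"
  by (simp_all add: psqrt_cis)

lemma norm_psqrt: "cmod (psqrt z) = sqrt (cmod z)"
  by (simp add: psqrt_def norm_mult)

lemma psqrt_Re_nonneg: "0 \<le> Re (psqrt z)"
  unfolding psqrt_Re using parg_range[of z]
  by (intro mult_nonneg_nonneg cos_ge_zero) auto

lemma psqrt_Im_nonpos:
  assumes "Im z \<le> 0"
  shows "Im (psqrt z) \<le> 0"
proof -
  have "0 \<le> sin (- (parg z / 2))"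
    using parg_nonpos[OF assms] parg_range[of z] by (intro sin_ge_zero) auto
  then show ?thesis unfolding psqrt_Im by (simp add: mult_nonneg_nonpos)
qed

lemma psqrt_Im_same_sign:
  assumes "Im z \<noteq> 0"
  shows "0 < Im z * Im (psqrt z)"
proof -
  have r: "0 < sqrt (cmod z)" using assms by auto
  show ?thesis
  proof (cases "Im z > 0")
    case True
    then have "0 < parg z \<and> parg z < pi"
      using Arg_lt_pi[of z] by (simp add: parg_def)
    then have "0 < sin (parg z / 2)" by (intro sin_gt_zero) auto
    then show ?thesis using True r by (simp add: psqrt_Im)
  next
    case False
    then have neg: "Im z < 0" using assms by simp
    then have "parg z < 0 \<and> -pi < parg z"
      using Arg_neg_iff[of z] mpi_less_Arg[of z] by (simp add: parg_def)
    then have "0 < sin (- (parg z / 2))" by (intro sin_gt_zero) auto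
    then show ?thesis using neg r by (simp add: psqrt_Im mult_neg_neg mult_pos_neg)
  qed
qed

text \<open>For numbers in the closed quadrant Re \<ge> 0, Im \<le> 0 the modulus of the sum squared
  dominates the sum of the squared moduli, since all cross terms are nonnegative.\<close>
lemma quadrant_sum_norm_sq:
  fixes z :: "'i \<Rightarrow> complex"
  assumes "finite A" and "\<forall>j\<in>A. 0 \<le> Re (z j) \<and> Im (z j) \<le> 0"
  shows "(\<Sum>j\<in>A. (cmod (z j))\<^sup>2) \<le> (cmod (\<Sum>j\<in>A. z j))\<^sup>2"
  using assms
proof (induction A rule: finite_induct)
  case empty
  then show ?case by simp
next
  case (insert x F)
  let ?s = "\<Sum>j\<in>F. z j"
  have "0 \<le> Re ?s" "Im ?s \<le> 0"
    using insert.prems by (auto simp: Re_sum Im_sum intro: sum_nonneg sum_nonpos)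
  moreover have "0 \<le> Re (z x)" "Im (z x) \<le> 0" using insert.prems by auto
  ultimately have cross: "0 \<le> Re (z x) * Re ?s + Im (z x) * Im ?s"
    by (simp add: mult_nonpos_nonpos)
  have "(cmod (z x + ?s))\<^sup>2 = (cmod (z x))\<^sup>2 + (cmod ?s)\<^sup>2 + 2 * (Re (z x) * Re ?s + Im (z x) * Im ?s)"
    by (simp add: cmod_power2 power2_sum algebra_simps)
  then show ?case using insert cross by simp
qed

lemma norm_wfun: "cmod (wfun n c a z) = cmod (\<Sum>j=1..n. complex_of_real (c j) * xi c a j z)"
  by (simp add: wfun_def norm_mult)

lemma norm_sq_summand:
  assumes "0 < c j"
  shows "(cmod (complex_of_real (c j) * xi c a j z))\<^sup>2 = c j * cmod (z - complex_of_real (a j))"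
proof -
  have "(cmod (complex_of_real (c j) * xi c a j z))\<^sup>2
      = (c j)\<^sup>2 * (sqrt (cmod (z - complex_of_real (a j)) / c j))\<^sup>2"
    using assms by (simp add: xi_def norm_mult norm_psqrt norm_divide power_mult_distrib)
  also have "\<dots> = c j * cmod (z - complex_of_real (a j))"
    using assms by (simp add: power2_eq_square)
  finally show ?thesis .
qed

lemma summand_in_quadrant:
  assumes "0 < c j" and "Im z \<le> 0"
  shows "0 \<le> Re (complex_of_real (c j) * xi c a j z) \<and> Im (complex_of_real (c j) * xi c a j z) \<le> 0"
  using assms psqrt_Re_nonneg psqrt_Im_nonpos[of "(z - complex_of_real (a j)) / complex_of_real (c j)"]
  by (simp add: xi_def divide_nonpos_pos mult_nonneg_nonpos)

lemma wfun_norm_sq_lower: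
  assumes "\<forall>k\<in>{1..n}. 0 < c k" and "Im z \<le> 0"
  shows "(\<Sum>j=1..n. c j * cmod (z - complex_of_real (a j))) \<le> (cmod (wfun n c a z))\<^sup>2"
proof -
  have "(\<Sum>j=1..n. c j * cmod (z - complex_of_real (a j)))
      = (\<Sum>j=1..n. (cmod (complex_of_real (c j) * xi c a j z))\<^sup>2)"
    using assms(1) by (intro sum.cong) (simp_all add: norm_sq_summand)
  also have "\<dots> \<le> (cmod (wfun n c a z))\<^sup>2"
    unfolding norm_wfun using assms summand_in_quadrant
    by (intro quadrant_sum_norm_sq) auto
  finally show ?thesis .
qed

text \<open>w has no zeros off the real axis: the imaginary parts of all summands have the
  strict sign of Im z.\<close>
lemma wfun_nonzero_off_axis:
  assumes "\<forall>k\<in>{1..n}. 0 < c k" and "1 \<le> n" and "Im z \<noteq> 0"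
  shows "wfun n c a z \<noteq> 0"
proof -
  let ?S = "\<Sum>j=1..n. complex_of_real (c j) * xi c a j z"
  have "0 < (\<Sum>j=1..n. c j * (Im z * Im (xi c a j z)))"
  proof (rule sum_pos)
    fix j assume j: "j \<in> {1..n}"
    have cj: "0 < c j" using assms(1) j by simp
    have "Im ((z - complex_of_real (a j)) / complex_of_real (c j)) = Im z / c j" by simp
    then have "0 < Im z / c j * Im (xi c a j z)"
      using psqrt_Im_same_sign[of "(z - complex_of_real (a j)) / complex_of_real (c j)"]
        assms(3) cj by (simp add: xi_def)
    then have "0 < Im z * Im (xi c a j z)"
      using cj by (simp add: zero_less_divide_iff)
    then show "0 < c j * (Im z * Im (xi c a j z))"
      using cj by simp
  qed (use assms(2) in auto)
  also have "\<dots> = Im z * Im ?S" by (simp add: Im_sum sum_distrib_left algebra_simps)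
  finally have "Im ?S \<noteq> 0" by auto
  then have "?S \<noteq> 0" by (metis zero_complex.sel(2))
  then show ?thesis using norm_wfun[of n c a z] by auto
qed

theorem lemma3p7:
  fixes n :: nat and c a :: "nat \<Rightarrow> real"
  assumes n2: "n \<ge> 2"
    and cpos: "\<forall>k\<in>{1..n}. c k > 0"
    and a1nonneg: "0 \<le> a 1"
    and amono: "\<forall>i\<in>{1..n}. \<forall>j\<in>{1..n}. i \<le> j \<longrightarrow> a i \<le> a j"
  shows "(\<forall>lam::real. \<forall>\<epsilon>::real. lam \<ge> a 1 \<and> \<epsilon> \<ge> 0 \<longrightarrow>
            (cmod (wfun n c a (complex_of_real lam - \<i> * complex_of_real \<epsilon>)))\<^sup>2
              \<ge> (\<Sum>j=1..n. c j * \<bar>lam - a j\<bar>))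
       \<and> (\<forall>\<mu>\<in>resolvent_set_A n c a. Re \<mu> \<ge> a 1 \<and> wfun n c a \<mu> = 0 \<longrightarrow>
            (\<exists>\<alpha>. (\<forall>k\<in>{1..n}. a k = \<alpha>) \<and> \<mu> = complex_of_real \<alpha>))"
proof (intro conjI allI impI ballI)
  fix lam \<epsilon> :: real
  assume "lam \<ge> a 1 \<and> \<epsilon> \<ge> 0"
  define z where "z = complex_of_real lam - \<i> * complex_of_real \<epsilon>"
  have "(\<Sum>j=1..n. c j * \<bar>lam - a j\<bar>) \<le> (\<Sum>j=1..n. c j * cmod (z - complex_of_real (a j)))"
  proof (intro sum_mono mult_left_mono)
    fix j assume "j \<in> {1..n}"
    then show "0 \<le> c j" using cpos by (simp add: less_imp_le)
    show "\<bar>lam - a j\<bar> \<le> cmod (z - complex_of_real (a j))"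
      using abs_Re_le_cmod[of "z - complex_of_real (a j)"] by (simp add: z_def)
  qed
  also have "\<dots> \<le> (cmod (wfun n c a z))\<^sup>2"
    using \<open>lam \<ge> a 1 \<and> \<epsilon> \<ge> 0\<close> by (intro wfun_norm_sq_lower cpos) (simp add: z_def)
  finally show "(cmod (wfun n c a (complex_of_real lam - \<i> * complex_of_real \<epsilon>)))\<^sup>2
      \<ge> (\<Sum>j=1..n. c j * \<bar>lam - a j\<bar>)" by (simp add: z_def)
next
  fix \<mu> assume "a 1 \<le> Re \<mu> \<and> wfun n c a \<mu> = 0"
  then have w0: "wfun n c a \<mu> = 0" by simp
  then have real: "Im \<mu> = 0" using wfun_nonzero_off_axis[OF cpos] n2 by fastforce
  have terms_nonneg: "\<forall>j\<in>{1..n}. 0 \<le> c j * cmod (\<mu> - complex_of_real (a j))"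
    using cpos by (simp add: less_imp_le)
  have "(\<Sum>j=1..n. c j * cmod (\<mu> - complex_of_real (a j))) \<le> 0"
    using wfun_norm_sq_lower[OF cpos, of \<mu> a] real w0 by simp
  then have "(\<Sum>j=1..n. c j * cmod (\<mu> - complex_of_real (a j))) = 0"
    using terms_nonneg by (intro antisym sum_nonneg) auto
  then have "\<forall>j\<in>{1..n}. c j * cmod (\<mu> - complex_of_real (a j)) = 0"
    using terms_nonneg sum_nonneg_eq_0_iff[of "{1..n}" "\<lambda>j. c j * cmod (\<mu> - complex_of_real (a j))"]
    by simp
  then have "\<forall>k\<in>{1..n}. a k = Re \<mu>" using cpos by (force simp: complex_eq_iff)
  then show "\<exists>\<alpha>. (\<forall>k\<in>{1..n}. a k = \<alpha>) \<and> \<mu> = complex_of_real \<alpha>"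
    using real by (auto simp: complex_eq_iff)
qed

end
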